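(* Let $k\geq 1$ be an integer and let $\psi\in\Psi_{2k+1}$. For $d\in\{1,2k+1\}$, let $b_{n,d}$ denote the $d$-dimensional Schoenberg coefficients of $\psi$; in particular, $b_{n,1}$ are its Fourier cosine coefficients, i.e. $\psi(\theta)=\sum_{n\ge0} b_{n,1}\cos(n\theta)$. Then for every integer $n\geq 0$, \[ b_{n,2k+1}=\sum_{i=0}^k a_i(n,k)\,b_{n+2i,1}, \] where \[ a_i(n,k)=\frac{(-1)^i}{2^k}\binom{k}{i}\frac{(n+k)(n+2i)}{(2k-1)!!}\,\frac{(n+1)_{(2k-1)}}{(n+i)_{(k+1)}}\qquad\text{for }(i,n)\neq(0,0), \] and $a_0(0,k)=1$.
   Context: For an integer $d\ge1$, $\mathbb{S}^d=\{x\in\mathbb{R}^{d+1}:\|x\|=1\}$ and $\theta(x,y)=\arccos(\langle x,y\rangle)$ is the great circle distance. $\Psi_d$ denotes the class of continuous functions $\psi:[0,\pi]\to\mathbb{R}$ with $\psi(0)=1$ such that $(x,y)\mapsto\psi(\theta(x,y))$ is positive definite on $\mathbb{S}^d$, i.e. $\sum_{i,j=1}^m c_ic_j\psi(\theta(x_i,x_j))\ge0$ for all $m\ge1$, all real $c_1,\dots,c_m$ and all distinct $x_1,\dots,x_m\in\mathbb{S}^d$. One has $\Psi_1\supset\Psi_2\supset\cdots$, and (Schoenberg) $\psi\in\Psi_d$ iff $\psi(\theta)=\sum_{n=0}^\infty b_{n,d}\,\frac{C_n^{(d-1)/2}(\cos\theta)}{C_n^{(d-1)/2}(1)}$ for unique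 coefficients $b_{n,d}\ge0$ with $\sum_n b_{n,d}=1$; these $b_{n,d}$ are the $d$-dimensional Schoenberg coefficients of $\psi$. Here $C_n^\lambda$ are Gegenbauer polynomials, with the convention that for $d=1$ the normalized term $C_n^0(\cos\theta)/C_n^0(1)$ is $\cos(n\theta)$, and $C_n^{1/2}=P_n$ are Legendre polynomials. Notation: $(2k-1)!!=\prod_{j=1}^k(2j-1)$, and $(x)_{(m)}=x(x+1)\cdots(x+m-1)$ is the Pochhammer symbol (with $(x)_{(0)}=1$). *)

theory Defs
  imports "HOL-Analysis.Analysis"
begin

text \<open>The sphere S^d in R^(d+1), with points represented as functions nat => real
  supported on {0..d}.\<close>
definition sphere_pts :: "nat \<Rightarrow> (nat \<Rightarrow> real) set" where
  "sphere_pts d = {x. (\<forall>i>d. x i = 0) \<and> (\<Sum>i\<le>d. (x i)\<^sup>2) = 1}"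

definition sp_inner :: "nat \<Rightarrow> (nat \<Rightarrow> real) \<Rightarrow> (nat \<Rightarrow> real) \<Rightarrow> real" where
  "sp_inner d x y = (\<Sum>i\<le>d. x i * y i)"

definition gc_dist :: "nat \<Rightarrow> (nat \<Rightarrow> real) \<Rightarrow> (nat \<Rightarrow> real) \<Rightarrow> real" where
  "gc_dist d x y = arccos (sp_inner d x y)"

definition pos_def_on_sphere :: "nat \<Rightarrow> (real \<Rightarrow> real) \<Rightarrow> bool" where
  "pos_def_on_sphere d \<psi> \<longleftrightarrow>
     (\<forall>(m::nat) (c::nat \<Rightarrow> real) (x::nat \<Rightarrow> nat \<Rightarrow> real).
        m \<ge> 1 \<longrightarrow> (\<forall>i<m. x i \<in> sphere_pts d) \<longrightarrow> inj_on x {..<m} \<longrightarrow>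
        (\<Sum>i<m. \<Sum>j<m. c i * c j * \<psi> (gc_dist d (x i) (x j))) \<ge> 0)"

definition Psi :: "nat \<Rightarrow> (real \<Rightarrow> real) set" where
  "Psi d = {\<psi>. continuous_on {0..pi} \<psi> \<and> \<psi> 0 = 1 \<and> pos_def_on_sphere d \<psi>}"

text \<open>Gegenbauer polynomial C_n^lam(x) (explicit formula; Gamma(n-k+lam)/Gamma(lam)
  written as a Pochhammer symbol).\<close>
definition gegenbauer :: "real \<Rightarrow> nat \<Rightarrow> real \<Rightarrow> real" where
  "gegenbauer lam n x = (\<Sum>k\<le>n div 2. (-1)^k * pochhammer lam (n - k)
        / (fact k * fact (n - 2*k)) * (2*x)^(n - 2*k))"

definition schoenberg_basis :: "nat \<Rightarrow> nat \<Rightarrow> real \<Rightarrow> real" where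
  "schoenberg_basis d n t =
     (if d = 1 then cos (real n * t)
      else gegenbauer ((real d - 1) / 2) n (cos t) / gegenbauer ((real d - 1) / 2) n 1)"

definition is_schoenberg_coeffs :: "nat \<Rightarrow> (real \<Rightarrow> real) \<Rightarrow> (nat \<Rightarrow> real) \<Rightarrow> bool" where
  "is_schoenberg_coeffs d \<psi> b \<longleftrightarrow>
     (\<forall>n. b n \<ge> 0) \<and> summable b \<and> suminf b = 1 \<and>
     (\<forall>t\<in>{0..pi}. (\<lambda>n. b n * schoenberg_basis d n t) sums \<psi> t)"

definition dfact_odd :: "nat \<Rightarrow> real" where
  "dfact_odd k = (\<Prod>j=1..k. real (2*j - 1))"

definition coef_a :: "nat \<Rightarrow> nat \<Rightarrow> nat \<Rightarrow> real" where
  "coef_a i n k =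
     (if i = 0 \<and> n = 0 then 1
      else (-1)^i / 2^k * real (k choose i) * (real (n + k) * real (n + 2*i)) / dfact_odd k
           * pochhammer (real n + 1) (2*k - 1) / pochhammer (real n + real i) (k + 1))"

end

theory Submission
  imports Defs
begin

text \<open>Write \<open>G_j(N, t)\<close> for the normalized basis term of dimension \<open>2j + 1\<close>, so that
  \<open>G_0(N, t) = cos (N t)\<close>. The shift \<open>\<lambda> \<mapsto> \<lambda> + 1\<close> of Gegenbauer polynomials (and for
  \<open>\<lambda> = 0\<close> the Chebyshev identity \<open>U_{N+2} - U_N = 2 T_{N+2}\<close>) gives the two-term relation
  \<open>G_j(N) = \<alpha>_j(N) G_{j+1}(N) - \<beta>_j(N) G_{j+1}(N-2)\<close> with \<open>\<alpha> > 0\<close> and \<open>\<beta> \<ge> 0\<close>.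
  Solved for \<open>G_{j+1}\<close>, it shows that every \<open>G_k(N)\<close> is a convex combination
  \<open>\<Sum>_m g_k(N, m) cos (m t)\<close>. Integrating both expansions of \<open>\<psi>\<close> against \<open>cos (n t)\<close> gives
  the triangular system \<open>b_{n,1} = \<Sum>_N b_{N,2k+1} g_k(N, n)\<close>. The coefficients \<open>a_i(n, k)\<close>
  obey the transposed two-term recursion, and a lower-triangular right inverse of a
  bidiagonal matrix is also a left inverse, so they invert this system.\<close>

section \<open>Gegenbauer polynomials\<close>

definition gegenbauer_coeff :: "real \<Rightarrow> nat \<Rightarrow> nat \<Rightarrow> real" where
  "gegenbauer_coeff lam N m = (-1)^m * pochhammer lam (N - m) / (fact m * fact (N - 2*m))"

lemma gegenbauer_eq_sum_coeff:
  "gegenbauer lam N x = (\<Sum>m\<le>N div 2. gegenbauer_coeff lam N m * (2*x)^(N - 2*m))"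
  by (simp add: gegenbauer_def gegenbauer_coeff_def)

lemma gegenbauer_diff_2_eq_sum_coeff:
  assumes "N \<ge> 2"
  shows "gegenbauer lam (N-2) x = (\<Sum>m\<le>N div 2.
     (if m = 0 then 0 else gegenbauer_coeff lam (N-2) (m - 1)) * (2*x)^(N - 2*m))"
proof -
  obtain M where M: "N = Suc (Suc M)" using assms by (metis add_2_eq_Suc le_Suc_ex)
  then have "N div 2 = Suc (M div 2)" by simp
  then show ?thesis by (simp only: sum.atMost_Suc_shift) (simp add: gegenbauer_eq_sum_coeff M)
qed

lemma gegenbauer_coeff_lambda_shift:
  assumes "m \<le> N div 2" "N \<ge> 2"
  shows "(real N + lam) * gegenbauer_coeff lam N m
    = lam * (gegenbauer_coeff (lam+1) N m - (if m = 0 then 0 else gegenbauer_coeff (lam+1) (N-2) (m-1)))"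
proof -
  define a where "a = N - m - 1"
  have Na: "N - m = Suc a" using assms unfolding a_def by (simp add: Suc_diff_Suc)
  define A where "A = pochhammer (lam+1) a"
  have p1: "pochhammer lam (N - m) = lam * A" by (simp add: Na A_def pochhammer_rec)
  have p2: "pochhammer (lam+1) (N - m) = A * (lam + 1 + real a)" by (simp add: Na A_def pochhammer_Suc)
  have Nr: "real N = real a + real m + 1" using Na by linarith
  show ?thesis
  proof (cases m)
    case 0
    then show ?thesis using p1 p2 by (simp add: gegenbauer_coeff_def Nr divide_simps)
  next
    case (Suc m')
    have "N - Suc (Suc m') = a" "N - 2 - 2*m' = N - 2*m" using Na Suc assms by simp_all
    moreover have "fact m = real m * fact m'" using Suc by simp
    moreover have "(fact (N - 2*m) :: real) > 0" "real m > 0" "(fact m' :: real) > 0" using Suc by simp_all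
    ultimately show ?thesis using p1 p2 Suc
      by (simp add: gegenbauer_coeff_def A_def Nr divide_simps) (simp add: algebra_simps)
  qed
qed

lemma gegenbauer_lambda_shift:
  assumes "N \<ge> 2"
  shows "(real N + lam) * gegenbauer lam N x
    = lam * (gegenbauer (lam+1) N x - gegenbauer (lam+1) (N-2) x)"
proof -
  have "(real N + lam) * gegenbauer lam N x
      = (\<Sum>m\<le>N div 2. ((real N + lam) * gegenbauer_coeff lam N m) * (2*x)^(N - 2*m))"
    by (simp add: gegenbauer_eq_sum_coeff sum_distrib_left mult.assoc)
  also have "\<dots> = (\<Sum>m\<le>N div 2. lam * (gegenbauer_coeff (lam+1) N m
      - (if m = 0 then 0 else gegenbauer_coeff (lam+1) (N-2) (m-1))) * (2*x)^(N - 2*m))"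
    by (rule sum.cong) (use gegenbauer_coeff_lambda_shift assms in auto)
  also have "\<dots> = lam * (gegenbauer (lam+1) N x - gegenbauer (lam+1) (N-2) x)"
    unfolding gegenbauer_diff_2_eq_sum_coeff[OF assms] gegenbauer_eq_sum_coeff[of "lam+1" N]
    by (simp add: sum_distrib_left sum_subtractf algebra_simps)
  finally show ?thesis .
qed

text \<open>The coefficients of \<open>2x C_{N-1}(x)\<close>, indexed like those of \<open>C_N(x)\<close>.\<close>
definition gegenbauer_coeff_pred :: "real \<Rightarrow> nat \<Rightarrow> nat \<Rightarrow> real" where
  "gegenbauer_coeff_pred lam N m =
     (-1)^m * pochhammer lam (N - 1 - m) * real (N - 2*m) / (fact m * fact (N - 2*m))"

lemma gegenbauer_coeff_rec:
  assumes "m \<le> N div 2" "N \<ge> 2"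
  shows "real N * gegenbauer_coeff lam N m
    = (real N + lam - 1) * gegenbauer_coeff_pred lam N m
      - (real N + 2*lam - 2) * (if m = 0 then 0 else gegenbauer_coeff lam (N-2) (m-1))"
proof -
  define a where "a = N - 1 - m"
  have Na: "N - m = Suc a" using assms unfolding a_def by (simp add: Suc_diff_Suc)
  define A where "A = pochhammer lam a"
  have p: "pochhammer lam (N - m) = A * (lam + real a)" by (simp add: Na A_def pochhammer_Suc)
  have Nr: "real N = real a + real m + 1" using Na by linarith
  have N2: "real (N - 2*m) = real N - 2 * real m" using assms by (simp add: of_nat_diff)
  show ?thesis
  proof (cases m)
    case 0
    then have "N - 1 = a" by (simp add: a_def)
    with 0 p show ?thesis
      by (simp add: gegenbauer_coeff_def gegenbauer_coeff_pred_def A_def Nr divide_simps)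
  next
    case (Suc m')
    have "N - Suc (Suc m') = a" "N - 1 - m = a" "N - 2 - 2*m' = N - 2*m"
      using Na Suc assms by (simp_all add: a_def)
    moreover have "fact m = real m * fact m'" using Suc by simp
    moreover have "(fact (N - 2*m) :: real) > 0" "real m > 0" "(fact m' :: real) > 0" using Suc by simp_all
    ultimately show ?thesis using p N2 Suc
      by (simp add: gegenbauer_coeff_def gegenbauer_coeff_pred_def A_def Nr divide_simps)
        (simp add: algebra_simps)
  qed
qed

lemma gegenbauer_pred_eq_sum_coeff:
  assumes "N \<ge> 2"
  shows "2 * x * gegenbauer lam (N-1) x = (\<Sum>m\<le>N div 2. gegenbauer_coeff_pred lam N m * (2*x)^(N - 2*m))"
proof -
  have "2 * x * gegenbauer lam (N-1) x = (\<Sum>m\<le>(N-1) div 2. gegenbauer_coeff_pred lam N m * (2*x)^(N - 2*m))"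
    unfolding gegenbauer_eq_sum_coeff sum_distrib_left
  proof (rule sum.cong)
    fix m assume "m \<in> {..(N-1) div 2}"
    then have d: "N - 2*m = Suc (N - 1 - 2*m)" using assms by auto
    then have "gegenbauer_coeff lam (N - 1) m = gegenbauer_coeff_pred lam N m"
      unfolding gegenbauer_coeff_def gegenbauer_coeff_pred_def d fact_Suc using d by (simp add: field_simps)
    with d show "2 * x * (gegenbauer_coeff lam (N - 1) m * (2 * x) ^ (N - 1 - 2 * m))
        = gegenbauer_coeff_pred lam N m * (2 * x) ^ (N - 2 * m)"
      by simp
  qed simp
  also have "\<dots> = (\<Sum>m\<le>N div 2. gegenbauer_coeff_pred lam N m * (2*x)^(N - 2*m))"
    by (rule sum.mono_neutral_left) (auto simp: gegenbauer_coeff_pred_def)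
  finally show ?thesis .
qed

lemma gegenbauer_rec:
  assumes "N \<ge> 2"
  shows "real N * gegenbauer lam N x
    = (real N + lam - 1) * (2 * x * gegenbauer lam (N-1) x) - (real N + 2*lam - 2) * gegenbauer lam (N-2) x"
proof -
  have "real N * gegenbauer lam N x = (\<Sum>m\<le>N div 2. (real N * gegenbauer_coeff lam N m) * (2*x)^(N - 2*m))"
    by (simp add: gegenbauer_eq_sum_coeff sum_distrib_left mult.assoc)
  also have "\<dots> = (\<Sum>m\<le>N div 2. ((real N + lam - 1) * gegenbauer_coeff_pred lam N m
      - (real N + 2*lam - 2) * (if m = 0 then 0 else gegenbauer_coeff lam (N-2) (m-1))) * (2*x)^(N - 2*m))"
    by (rule sum.cong) (use gegenbauer_coeff_rec assms in auto)
  also have "\<dots> = (real N + lam - 1) * (2 * x * gegenbauer lam (N-1) x)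
      - (real N + 2*lam - 2) * gegenbauer lam (N-2) x"
    unfolding gegenbauer_diff_2_eq_sum_coeff[OF assms] gegenbauer_pred_eq_sum_coeff[OF assms]
    by (simp add: sum_distrib_left sum_subtractf left_diff_distrib mult.assoc)
  finally show ?thesis .
qed

lemma gegenbauer_at_1: "gegenbauer lam N 1 = pochhammer (2*lam) N / fact N"
proof (induction N rule: less_induct)
  case (less N)
  show ?case
  proof (cases "N < 2")
    case True
    then consider "N = 0" | "N = 1" by linarith
    then show ?thesis by cases (simp_all add: gegenbauer_def)
  next
    case False
    then obtain M where M: "N = Suc (Suc M)" by (metis add_2_eq_Suc le_Suc_ex not_less)
    define P where "P = pochhammer (2*lam) M"
    have IH1: "gegenbauer lam (N-1) 1 = P * (2*lam + real M) / ((real M + 1) * fact M)"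
      using less.IH[of "N-1"] M by (simp add: P_def pochhammer_Suc algebra_simps)
    have IH2: "gegenbauer lam (N-2) 1 = P / fact M"
      using less.IH[of "N-2"] M by (simp add: P_def)
    have "real N * gegenbauer lam N 1
        = real N * (P * (2*lam + real M) * (2*lam + real M + 1) / ((real M + 2) * (real M + 1) * fact M))"
      using gegenbauer_rec[of N lam 1] False M unfolding IH1 IH2
      by (simp add: divide_simps) (simp add: algebra_simps)
    moreover have "real N \<noteq> 0" using M by simp
    ultimately have "gegenbauer lam N 1
        = P * (2*lam + real M) * (2*lam + real M + 1) / ((real M + 2) * (real M + 1) * fact M)"
      using mult_left_cancel by blast
    also have "\<dots> = pochhammer (2*lam) N / fact N"
      using M by (simp add: P_def pochhammer_Suc algebra_simps)
    finally show ?thesis .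
  qed
qed

lemma gegenbauer_one_rec:
  assumes "N \<ge> 2"
  shows "gegenbauer 1 N x = 2 * x * gegenbauer 1 (N-1) x - gegenbauer 1 (N-2) x"
proof -
  have "real N * gegenbauer 1 N x = real N * (2 * x * gegenbauer 1 (N-1) x - gegenbauer 1 (N-2) x)"
    using gegenbauer_rec[OF assms, of 1 x] by (simp add: algebra_simps)
  then show ?thesis using assms by simp
qed

text \<open>\<open>C^1_N\<close> is the Chebyshev polynomial \<open>U_N\<close> of the second kind.\<close>
lemma gegenbauer_one_cos_diff:
  "gegenbauer 1 (N+2) (cos t) - gegenbauer 1 N (cos t) = 2 * cos (real (N+2) * t)"
proof (induction N rule: less_induct)
  case (less N)
  define U where "U n = gegenbauer 1 n (cos t)" for n
  have U_rec: "U n = 2 * cos t * U (n-1) - U (n-2)" if "n \<ge> 2" for n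
    using gegenbauer_one_rec[OF that] by (simp add: U_def)
  have U01: "U 0 = 1" "U 1 = 2 * cos t" by (simp_all add: U_def gegenbauer_def)
  have cos_prod: "cos t * cos (a * t) = (cos ((a - 1) * t) + cos ((a + 1) * t)) / 2" for a
    using cos_times_cos[of "a * t" t] by (simp add: algebra_simps)
  have D0: "U 2 - U 0 = 2 * cos (2 * t)"
    using U_rec[of 2] U01 by (simp add: cos_double_cos power2_eq_square)
  consider "N = 0" | "N = 1" | "N \<ge> 2" by linarith
  then show ?case
  proof cases
    case 1
    then show ?thesis using D0 by (simp add: U_def numeral_2_eq_2)
  next
    case 2
    have "U 3 - U 1 = 2 * cos t * (U 2 - U 0) - 2 * cos t"
      using U_rec[of 3] U01 by (simp add: algebra_simps)
    also have "\<dots> = 2 * cos (3 * t)"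
      using D0 cos_prod[of 2] by (simp add: algebra_simps)
    finally show ?thesis using 2 by (simp add: U_def numeral_3_eq_3)
  next
    case 3
    have IH1: "U (N+1) - U (N-1) = 2 * cos (real (N+1) * t)"
      using less.IH[of "N-1"] 3 by (simp add: U_def)
    have IH2: "U N - U (N-2) = 2 * cos (real N * t)"
      using less.IH[of "N-2"] 3 by (simp add: U_def Suc_diff_Suc numeral_2_eq_2)
    have "U (N+2) - U N = 2 * cos t * (U (N+1) - U (N-1)) - (U N - U (N-2))"
      using U_rec[of "N+2"] U_rec[of N] 3 by (simp add: algebra_simps)
    also have "\<dots> = 2 * cos (real (N+2) * t)"
      unfolding IH1 IH2 using cos_prod[of "real (N+1)"] by (simp add: algebra_simps)
    finally show ?thesis by (simp add: U_def)
  qed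
qed

lemma gegenbauer_one_at_1: "gegenbauer 1 N 1 = real N + 1"
proof -
  have "pochhammer (2::real) N = fact (Suc N)"
    using pochhammer_fact[of "Suc N", where 'a=real] by (simp add: pochhammer_rec)
  then show ?thesis by (simp add: gegenbauer_at_1)
qed

lemma normalized_gegenbauer_lambda_shift:
  fixes lam :: real
  assumes lam: "lam > 0" and N: "N \<ge> 2"
  shows "gegenbauer lam N x / gegenbauer lam N 1
    = (real N + 2*lam) * (real N + 2*lam + 1) / (2 * (2*lam + 1) * (real N + lam))
        * (gegenbauer (lam+1) N x / gegenbauer (lam+1) N 1)
      - real N * (real N - 1) / (2 * (2*lam + 1) * (real N + lam))
        * (gegenbauer (lam+1) (N-2) x / gegenbauer (lam+1) (N-2) 1)"
proof -
  obtain M where M: "N = M + 2" using N by (metis add.commute le_Suc_ex)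
  define m where "m = real M"
  define P where "P = pochhammer (2*lam+2) M"
  define F where "F = (fact M :: real)"
  have pos: "m \<ge> 0" "P > 0" "F > 0" using lam by (simp_all add: m_def P_def F_def pochhammer_pos)
  have fact_N: "(fact N :: real) = (m+2)*(m+1)*F" by (simp add: M m_def F_def algebra_simps)
  have at1: "gegenbauer lam N 1 = 2*lam*(2*lam+1)*P / ((m+2)*(m+1)*F)"
    unfolding gegenbauer_at_1 fact_N by (simp add: M P_def pochhammer_rec numeral_2_eq_2 algebra_simps)
  have at1_lam_Suc: "gegenbauer (lam+1) N 1 = P*(2*lam+2+m)*(2*lam+3+m) / ((m+2)*(m+1)*F)"
    unfolding gegenbauer_at_1 fact_N by (simp add: M P_def m_def pochhammer_Suc numeral_2_eq_2 algebra_simps)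
  have at1_lam_Suc_pred: "gegenbauer (lam+1) (N-2) 1 = P / F"
    unfolding gegenbauer_at_1 by (simp add: M P_def F_def algebra_simps)
  have shift: "gegenbauer lam N x
      = lam * (gegenbauer (lam+1) N x - gegenbauer (lam+1) (N-2) x) / ((m+2)+lam)"
    using gegenbauer_lambda_shift[OF N, of lam x] lam pos by (simp add: M m_def field_simps)
  show ?thesis
    unfolding at1 at1_lam_Suc at1_lam_Suc_pred shift using lam pos
    by (simp add: M m_def divide_simps) (simp add: algebra_simps)
qed

section \<open>The odd-dimensional basis and its cosine expansion\<close>

text \<open>The guard avoids the junk value \<open>0 / 0\<close> at \<open>j = N = 0\<close>.\<close>
definition raise_alpha :: "nat \<Rightarrow> nat \<Rightarrow> real" where
  "raise_alpha j N = (if j = 0 \<and> N = 0 then 1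
     else real (N + 2*j) * real (N + 2*j + 1) / (2 * real (2*j + 1) * real (N + j)))"

definition raise_beta :: "nat \<Rightarrow> nat \<Rightarrow> real" where
  "raise_beta j N = real N * (real N - 1) / (2 * real (2*j + 1) * real (N + j))"

lemma raise_alpha_pos: "raise_alpha j N > 0"
  by (auto simp: raise_alpha_def intro!: divide_pos_pos)

lemma raise_beta_nonneg: "raise_beta j N \<ge> 0"
  by (cases N) (auto simp: raise_beta_def intro!: divide_nonneg_pos)

lemma raise_beta_eq_0: "N < 2 \<Longrightarrow> raise_beta j N = 0"
  by (auto simp: raise_beta_def less_2_cases_iff)

lemma schoenberg_basis_odd_raise:
  "schoenberg_basis (2*j + 1) N t
    = raise_alpha j N * schoenberg_basis (2 * Suc j + 1) N t
      - raise_beta j N * schoenberg_basis (2 * Suc j + 1) (N-2) t"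
proof -
  consider "N = 0" | "N = 1" | "N \<ge> 2" "j = 0" | "N \<ge> 2" "j > 0" by linarith
  then show ?thesis
  proof cases
    case 1
    then show ?thesis by (simp add: schoenberg_basis_def raise_alpha_def raise_beta_def gegenbauer_def)
  next
    case 2
    have "raise_alpha j 1 = 1" by (simp add: raise_alpha_def divide_simps) (simp add: algebra_simps)
    with 2 show ?thesis
      by (auto simp: schoenberg_basis_def raise_beta_def gegenbauer_def divide_simps)
  next
    case 3
    then obtain M where M: "N = M + 2" by (metis add.commute le_Suc_ex)
    have basis: "schoenberg_basis (2*j + 1) N t = cos (real N * t)"
      "schoenberg_basis (2 * Suc j + 1) N t = gegenbauer 1 N (cos t) / (real N + 1)"
      "schoenberg_basis (2 * Suc j + 1) (N-2) t = gegenbauer 1 (N-2) (cos t) / (real N - 1)"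
      using 3 by (simp_all add: schoenberg_basis_def gegenbauer_one_at_1 of_nat_diff)
    have "gegenbauer 1 N (cos t) - gegenbauer 1 (N-2) (cos t) = 2 * cos (real N * t)"
      using gegenbauer_one_cos_diff[of M t] M by simp
    moreover have "real N - 1 \<noteq> 0" using 3 by simp
    ultimately show ?thesis unfolding basis using 3
      by (simp add: raise_alpha_def raise_beta_def divide_simps) (simp add: algebra_simps)
  next
    case 4
    have basis: "schoenberg_basis (2*j + 1) n t = gegenbauer (real j) n (cos t) / gegenbauer (real j) n 1"
      "schoenberg_basis (2 * Suc j + 1) n t = gegenbauer (real j + 1) n (cos t) / gegenbauer (real j + 1) n 1"
      for n
      using 4 by (simp_all add: schoenberg_basis_def add_divide_distrib add.commute)
    have coeffs: "raise_alpha j N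
        = (real N + 2 * real j) * (real N + 2 * real j + 1) / (2 * (2 * real j + 1) * (real N + real j))"
      "raise_beta j N = real N * (real N - 1) / (2 * (2 * real j + 1) * (real N + real j))"
      using 4 by (simp_all add: raise_alpha_def raise_beta_def add.commute)
    show ?thesis
      unfolding basis coeffs by (rule normalized_gegenbauer_lambda_shift) (use 4 in auto)
  qed
qed

text \<open>\<open>cos_coeff j N m\<close> is the coefficient of \<open>cos (m t)\<close> in \<open>schoenberg_basis (2 j + 1) N t\<close>;
  the recursion solves \<open>schoenberg_basis_odd_raise\<close> for the higher-dimensional term.\<close>
function cos_coeff :: "nat \<Rightarrow> nat \<Rightarrow> nat \<Rightarrow> real" where
  "cos_coeff 0 N m = (if N = m then 1 else 0)"
| "cos_coeff (Suc j) N m = (if N < 2 then cos_coeff j N m / raise_alpha j N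
      else (cos_coeff j N m + raise_beta j N * cos_coeff (Suc j) (N - 2) m) / raise_alpha j N)"
  by pat_completeness auto
termination by (relation "measures [\<lambda>(j, N, m). j, \<lambda>(j, N, m). N]") auto

declare cos_coeff.simps(2)[simp del]

lemma cos_coeff_raise:
  "cos_coeff j N m = raise_alpha j N * cos_coeff (Suc j) N m - raise_beta j N * cos_coeff (Suc j) (N-2) m"
  using raise_alpha_pos[of j N] raise_beta_eq_0[of N j]
  by (cases "N < 2") (simp_all add: cos_coeff.simps(2)[of j N m])

lemma cos_coeff_nonneg: "cos_coeff j N m \<ge> 0"
proof (induction j N m rule: cos_coeff.induct)
  case (2 j N m)
  then show ?case using raise_alpha_pos[of j N] raise_beta_nonneg[of j N]
    by (auto simp: cos_coeff.simps(2)[of j N m] intro!: divide_nonneg_pos)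
qed simp

lemma cos_coeff_eq_0: "N < m \<Longrightarrow> cos_coeff j N m = 0"
proof (induction j N m rule: cos_coeff.induct)
  case (2 j N m)
  then show ?case by (auto simp: cos_coeff.simps(2)[of j N m])
qed simp

lemma schoenberg_basis_odd_eq_cos_sum:
  "N \<le> M \<Longrightarrow> schoenberg_basis (2*j + 1) N t = (\<Sum>m\<le>M. cos_coeff j N m * cos (real m * t))"
proof (induction j arbitrary: N)
  case 0
  then show ?case by (simp add: schoenberg_basis_def if_distrib[of "\<lambda>c. c * _"] cong: if_cong)
next
  case (Suc j)
  define R where
    "R N = schoenberg_basis (2 * Suc j + 1) N t - (\<Sum>m\<le>M. cos_coeff (Suc j) N m * cos (real m * t))" for N
  have "R N = 0" if "N \<le> M" for N
    using that
  proof (induction N rule: less_induct)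
    case (less N)
    have "raise_alpha j N * R N = raise_beta j N * R (N-2)"
      using schoenberg_basis_odd_raise[of j N t] Suc.IH[OF less.prems]
      unfolding R_def cos_coeff_raise[of j N]
      by (simp add: sum_distrib_left sum_subtractf left_diff_distrib right_diff_distrib mult.assoc)
    also have "\<dots> = 0"
      using less.IH[of "N-2"] less.prems raise_beta_eq_0[of N j] by (cases "N < 2") auto
    finally show ?case using raise_alpha_pos[of j N] by simp
  qed
  then show ?case using Suc.prems by (simp add: R_def)
qed

lemma schoenberg_basis_odd_at_0: "schoenberg_basis (2*j + 1) N 0 = 1"
  using pochhammer_pos[of "2 * real j" N] by (auto simp: schoenberg_basis_def gegenbauer_at_1 gr0_conv_Suc)

lemma cos_coeff_sum_eq_1: "(\<Sum>m\<le>N. cos_coeff j N m) = 1"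
  using schoenberg_basis_odd_eq_cos_sum[of N N j 0] schoenberg_basis_odd_at_0[of j N] by simp

lemma abs_schoenberg_basis_odd_le_1: "\<bar>schoenberg_basis (2*j + 1) N t\<bar> \<le> 1"
proof -
  have "\<bar>schoenberg_basis (2*j + 1) N t\<bar>
      \<le> (\<Sum>m\<le>N. \<bar>cos_coeff j N m * cos (real m * t)\<bar>)"
    unfolding schoenberg_basis_odd_eq_cos_sum[OF order_refl] by (rule sum_abs)
  also have "\<dots> \<le> (\<Sum>m\<le>N. cos_coeff j N m)"
    by (rule sum_mono) (simp add: abs_mult cos_coeff_nonneg mult_left_le)
  finally show ?thesis by (simp add: cos_coeff_sum_eq_1)
qed

section \<open>Fourier cosine coefficients\<close>

lemma has_integral_cos_scaled:
  "((\<lambda>t. cos (a * t)) has_integral (if a = 0 then pi else sin (a * pi) / a)) {0..pi}"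
proof (cases "a = 0")
  case True
  then show ?thesis using has_integral_const_real[of "1::real" 0 pi] by simp
next
  case False
  have "((\<lambda>t. sin (a * t) / a) has_real_derivative cos (a * x)) (at x within {0..pi})" for x
    using False by (auto intro!: derivative_eq_intros)
  then have "((\<lambda>t. cos (a * t)) has_integral (sin (a * pi) / a - sin (a * 0) / a)) {0..pi}"
    by (intro fundamental_theorem_of_calculus) (auto simp: has_real_derivative_iff_has_vector_derivative)
  then show ?thesis using False by simp
qed

lemma integral_cos_mult_cos:
  "integral\<^sup>L (lebesgue_on {0..pi}) (\<lambda>t. cos (real m * t) * cos (real n * t))
     = (if m \<noteq> n then 0 else if n = 0 then pi else pi / 2)"
proof -
  define a1 where "a1 = real m - real n"
  define a2 where "a2 = real m + real n"
  have "sin (a1 * pi) = 0" "sin (a2 * pi) = 0"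
    unfolding a1_def a2_def left_diff_distrib distrib_right sin_diff sin_add by (simp_all add: sin_npi)
  then have "((\<lambda>t. cos (a1 * t) / 2 + cos (a2 * t) / 2) has_integral
      (if a1 = 0 then pi else 0) / 2 + (if a2 = 0 then pi else 0) / 2) {0..pi}"
    using has_integral_cos_scaled[of a1] has_integral_cos_scaled[of a2]
    by (intro has_integral_add has_integral_divide) (simp_all split: if_splits)
  moreover have "cos (real m * t) * cos (real n * t) = cos (a1 * t) / 2 + cos (a2 * t) / 2" for t
    unfolding cos_times_cos a1_def a2_def by (simp add: algebra_simps add_divide_distrib)
  moreover have "(if a1 = 0 then pi else 0) / 2 + (if a2 = 0 then pi else 0) / 2
      = (if m \<noteq> n then 0 else if n = 0 then pi else pi / 2)"
    by (auto simp: a1_def a2_def)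
  ultimately have "((\<lambda>t. cos (real m * t) * cos (real n * t)) has_integral
      (if m \<noteq> n then 0 else if n = 0 then pi else pi / 2)) {0..pi}"
    by simp
  moreover have "integrable (lebesgue_on {0..pi}) (\<lambda>t. cos (real m * t) * cos (real n * t))"
    by (intro continuous_imp_integrable_real continuous_intros)
  ultimately show ?thesis
    by (simp add: lebesgue_integral_eq_integral integral_unique)
qed

lemma sums_integral_bounded_series:
  fixes c :: "nat \<Rightarrow> real" and \<phi> :: "nat \<Rightarrow> real \<Rightarrow> real"
  assumes c: "summable (\<lambda>i. \<bar>c i\<bar>)"
    and cont: "\<And>i. continuous_on {a..b} (\<phi> i)"
    and bound: "\<And>i t. t \<in> {a..b} \<Longrightarrow> \<bar>\<phi> i t\<bar> \<le> 1"
    and f: "\<And>t. t \<in> {a..b} \<Longrightarrow> (\<lambda>i. c i * \<phi> i t) sums f t"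
  shows "(\<lambda>i. c i * integral\<^sup>L (lebesgue_on {a..b}) (\<phi> i))
    sums integral\<^sup>L (lebesgue_on {a..b}) f"
proof -
  define M where "M = lebesgue_on {a..b}"
  have space: "space M = {a..b}" by (simp add: M_def)
  have term_bound: "norm (c i * \<phi> i t) \<le> \<bar>c i\<bar>" if "t \<in> {a..b}" for i t
    using bound[OF that, of i] by (simp add: abs_mult mult_left_le)
  have integrable: "integrable M (\<lambda>t. c i * \<phi> i t)" "integrable M (\<lambda>t. \<bar>c i\<bar>)" for i
    unfolding M_def by (intro continuous_imp_integrable_real continuous_intros cont)+
  have "(LINT t|M. norm (c i * \<phi> i t)) \<le> (LINT t|M. \<bar>c i\<bar>)" for i
    using integrable term_bound by (intro integral_mono) (auto simp: space)
  then have "norm (LINT t|M. norm (c i * \<phi> i t)) \<le> \<bar>c i\<bar> * measure M (space M)" for i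
    by (simp add: integral_nonneg_AE mult.commute)
  then have "summable (\<lambda>i. LINT t|M. norm (c i * \<phi> i t))"
    by (intro summable_comparison_test[OF _ summable_mult2[OF c]]) auto
  moreover have "AE t in M. summable (\<lambda>i. norm (c i * \<phi> i t))"
    using term_bound by (intro AE_I2 summable_comparison_test[OF _ c]) (auto simp: space)
  ultimately have "(\<lambda>i. LINT t|M. c i * \<phi> i t) sums (LINT t|M. (\<Sum>i. c i * \<phi> i t))"
    using integrable by (intro sums_integral)
  moreover have "(LINT t|M. (\<Sum>i. c i * \<phi> i t)) = (LINT t|M. f t)"
    using f by (intro Bochner_Integration.integral_cong) (auto simp: space sums_iff)
  ultimately show ?thesis by (simp add: M_def)
qed

lemma integral_schoenberg_basis_odd_mult_cos:
  "integral\<^sup>L (lebesgue_on {0..pi}) (\<lambda>t. schoenberg_basis (2*j + 1) N t * cos (real n * t))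
     = cos_coeff j N n * (if n = 0 then pi else pi / 2)"
proof -
  have "integral\<^sup>L (lebesgue_on {0..pi}) (\<lambda>t. schoenberg_basis (2*j + 1) N t * cos (real n * t))
      = (\<Sum>m\<le>N. cos_coeff j N m
          * integral\<^sup>L (lebesgue_on {0..pi}) (\<lambda>t. cos (real m * t) * cos (real n * t)))"
    unfolding schoenberg_basis_odd_eq_cos_sum[OF order_refl] sum_distrib_right mult.assoc
    by (subst Bochner_Integration.integral_sum)
      (auto intro!: continuous_imp_integrable_real continuous_intros simp: integral_mult_right_zero)
  also have "\<dots> = (\<Sum>m\<le>N. if m = n then cos_coeff j N n * (if n = 0 then pi else pi / 2) else 0)"
    by (intro sum.cong) (auto simp: integral_cos_mult_cos)
  also have "\<dots> = cos_coeff j N n * (if n = 0 then pi else pi / 2)"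
    by (simp add: cos_coeff_eq_0)
  finally show ?thesis .
qed

lemma integral_cos_series_mult_cos:
  assumes c: "summable (\<lambda>i. \<bar>c i\<bar>)"
    and f: "\<And>t. t \<in> {0..pi} \<Longrightarrow> (\<lambda>i. c i * cos (real i * t)) sums f t"
  shows "integral\<^sup>L (lebesgue_on {0..pi}) (\<lambda>t. f t * cos (real n * t))
    = c n * (if n = 0 then pi else pi / 2)"
proof -
  have "(\<lambda>i. c i * integral\<^sup>L (lebesgue_on {0..pi}) (\<lambda>t. cos (real i * t) * cos (real n * t)))
      sums integral\<^sup>L (lebesgue_on {0..pi}) (\<lambda>t. f t * cos (real n * t))"
  proof (rule sums_integral_bounded_series[OF c])
    show "(\<lambda>i. c i * (cos (real i * t) * cos (real n * t))) sums (f t * cos (real n * t))"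
      if "t \<in> {0..pi}" for t
      using sums_mult2[OF f[OF that], of "cos (real n * t)"] by (simp add: mult.assoc)
    show "continuous_on {0..pi} (\<lambda>t. cos (real i * t) * cos (real n * t))" for i
      by (intro continuous_intros)
    show "\<bar>cos (real i * t) * cos (real n * t)\<bar> \<le> 1" for i t
      by (simp add: abs_mult mult_le_one)
  qed
  moreover have "c i * integral\<^sup>L (lebesgue_on {0..pi}) (\<lambda>t. cos (real i * t) * cos (real n * t))
      = (if i = n then c n * (if n = 0 then pi else pi / 2) else 0)" for i
    by (simp add: integral_cos_mult_cos)
  ultimately have "(\<lambda>i. if i = n then c n * (if n = 0 then pi else pi / 2) else 0)
      sums integral\<^sup>L (lebesgue_on {0..pi}) (\<lambda>t. f t * cos (real n * t))"
    by simp
  then show ?thesis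
    using sums_single[of n "\<lambda>_. c n * (if n = 0 then pi else pi / 2)"] sums_unique2 by blast
qed

lemma cos_coeff_series:
  assumes b1: "is_schoenberg_coeffs 1 \<psi> b1" and b: "is_schoenberg_coeffs (2*j + 1) \<psi> b"
  shows "(\<lambda>N. b N * cos_coeff j N n) sums b1 n"
proof -
  define w :: real where "w = (if n = 0 then pi else pi / 2)"
  have "(\<lambda>N. b N * integral\<^sup>L (lebesgue_on {0..pi})
      (\<lambda>t. schoenberg_basis (2*j + 1) N t * cos (real n * t)))
      sums integral\<^sup>L (lebesgue_on {0..pi}) (\<lambda>t. \<psi> t * cos (real n * t))"
  proof (rule sums_integral_bounded_series)
    show "summable (\<lambda>N. \<bar>b N\<bar>)"
      using b by (simp add: is_schoenberg_coeffs_def)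
    show "(\<lambda>N. b N * (schoenberg_basis (2*j + 1) N t * cos (real n * t))) sums (\<psi> t * cos (real n * t))"
      if "t \<in> {0..pi}" for t
      using b that sums_mult2[of "\<lambda>N. b N * schoenberg_basis (2*j + 1) N t" "\<psi> t" "cos (real n * t)"]
      by (simp add: is_schoenberg_coeffs_def mult.assoc)
    show "continuous_on {0..pi} (\<lambda>t. schoenberg_basis (2*j + 1) N t * cos (real n * t))" for N
      unfolding schoenberg_basis_odd_eq_cos_sum[OF order_refl] by (intro continuous_intros)
    show "\<bar>schoenberg_basis (2*j + 1) N t * cos (real n * t)\<bar> \<le> 1" for N t
      using abs_schoenberg_basis_odd_le_1[of j N t] by (simp add: abs_mult mult_le_one)
  qed
  moreover have "integral\<^sup>L (lebesgue_on {0..pi}) (\<lambda>t. \<psi> t * cos (real n * t)) = b1 n * w"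
    using b1 unfolding w_def
    by (intro integral_cos_series_mult_cos) (auto simp: is_schoenberg_coeffs_def schoenberg_basis_def)
  ultimately have "(\<lambda>N. b N * cos_coeff j N n * w / w) sums (b1 n * w / w)"
    by (intro sums_divide) (simp only: integral_schoenberg_basis_odd_mult_cos w_def mult.assoc)
  moreover have "w \<noteq> 0" by (simp add: w_def)
  ultimately show ?thesis by simp
qed

section \<open>Inverting the triangular system\<close>

text \<open>In matrix terms: if \<open>T\<close> has diagonal \<open>d\<close> and entries \<open>-e N\<close> at \<open>(N, N - 2)\<close>, and the
  lower-triangular \<open>X\<close> satisfies \<open>T X = 1\<close>, then \<open>X T = 1\<close>.\<close>
lemma bidiagonal_right_inverse_is_left_inverse:
  fixes d e :: "nat \<Rightarrow> real" and X :: "nat \<Rightarrow> nat \<Rightarrow> real"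
  assumes d: "\<And>N. d N \<noteq> 0" and e: "\<And>N. N < 2 \<Longrightarrow> e N = 0"
    and lower: "\<And>N n. N < n \<Longrightarrow> X N n = 0"
    and right: "\<And>N n. d N * X N n - e N * X (N-2) n = (if N = n then 1 else 0)"
  shows "d n * X N n - e (n+2) * X N (n+2) = (if N = n then 1 else 0)"
proof -
  have e_X_pred: "e N * X (N-2) n = 0" if "N \<le> n" for N n
    using e[of N] lower[of "N-2" n] that by (cases "N < 2") auto
  have X_rec: "X N n = e N * X (N-2) n / d N" if "N \<noteq> n" for N n
    using right[of N n] d[of N] that by (simp add: field_simps)
  have diag: "X n n = 1 / d n" for n
    using right[of n n] e_X_pred[of n n] d[of n] by (simp add: field_simps)
  define Y where "Y N = d n * X N n - e (n+2) * X N (n+2)" for N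
  have "Y N = (if N = n then 1 else 0)"
  proof (induction N rule: less_induct)
    case (less N)
    consider "N = n" | "N = n + 2" | "N \<noteq> n" "N \<noteq> n + 2" by blast
    then show ?case
    proof cases
      case 1
      then show ?thesis using diag[of n] lower[of n "n+2"] d[of n] by (simp add: Y_def)
    next
      case 2
      then show ?thesis using X_rec[of "n+2" n] diag[of n] diag[of "n+2"] d[of n]
        by (simp add: Y_def)
    next
      case 3
      have "Y N = e N * Y (N-2) / d N"
        using X_rec[of N n] X_rec[of N "n+2"] 3 by (simp add: Y_def diff_divide_distrib algebra_simps)
      also have "\<dots> = 0"
        using e[of N] less.IH[of "N-2"] 3 by (cases "N < 2") auto
      finally show ?thesis using 3 by simp
    qed
  qed
  then show ?thesis by (simp add: Y_def)
qed

text \<open>\<open>inv_coeff j i n\<close> is the weight of \<open>b_{n+2i,1}\<close> in \<open>b_{n,2j+1}\<close>; the recursion is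
  \<open>schoenberg_basis_odd_raise\<close> transposed to the coefficient side.\<close>
fun inv_coeff :: "nat \<Rightarrow> nat \<Rightarrow> nat \<Rightarrow> real" where
  "inv_coeff 0 i n = (if i = 0 then 1 else 0)"
| "inv_coeff (Suc j) i n = raise_alpha j n * inv_coeff j i n
     - (if i = 0 then 0 else raise_beta j (n+2) * inv_coeff j (i - 1) (n+2))"

lemma inv_coeff_eq_0: "j < i \<Longrightarrow> inv_coeff j i n = 0"
  by (induction j arbitrary: i n) auto

lemma sum_inv_coeff_Suc:
  "(\<Sum>i\<le>Suc j. inv_coeff (Suc j) i n * f (n + 2*i))
    = raise_alpha j n * (\<Sum>i\<le>j. inv_coeff j i n * f (n + 2*i))
      - raise_beta j (n+2) * (\<Sum>i\<le>j. inv_coeff j i (n+2) * f (n + 2 + 2*i))"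
proof -
  have "(\<Sum>i\<le>Suc j. inv_coeff (Suc j) i n * f (n + 2*i))
      = (\<Sum>i\<le>Suc j. raise_alpha j n * inv_coeff j i n * f (n + 2*i))
        - (\<Sum>i\<le>Suc j. (if i = 0 then 0 else raise_beta j (n+2) * inv_coeff j (i - 1) (n+2)) * f (n + 2*i))"
    by (simp only: inv_coeff.simps left_diff_distrib sum_subtractf)
  also have "(\<Sum>i\<le>Suc j. raise_alpha j n * inv_coeff j i n * f (n + 2*i))
      = raise_alpha j n * (\<Sum>i\<le>j. inv_coeff j i n * f (n + 2*i))"
    by (simp add: sum_distrib_left inv_coeff_eq_0 mult.assoc)
  also have "(\<Sum>i\<le>Suc j. (if i = 0 then 0 else raise_beta j (n+2) * inv_coeff j (i - 1) (n+2)) * f (n + 2*i))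
      = raise_beta j (n+2) * (\<Sum>i\<le>j. inv_coeff j i (n+2) * f (n + 2 + 2*i))"
    by (subst sum.atMost_Suc_shift) (simp add: sum_distrib_left algebra_simps)
  finally show ?thesis .
qed

lemma inv_coeff_cos_coeff:
  "(\<Sum>i\<le>j. inv_coeff j i n * cos_coeff j N (n + 2*i)) = (if N = n then 1 else 0)"
proof (induction j arbitrary: n N)
  case 0
  then show ?case by simp
next
  case (Suc j)
  define X where "X N n = (\<Sum>i\<le>j. inv_coeff j i n * cos_coeff (Suc j) N (n + 2*i))" for N n
  have "raise_alpha j n * X N n - raise_beta j (n+2) * X N (n+2) = (if N = n then 1 else 0)"
  proof (rule bidiagonal_right_inverse_is_left_inverse)
    show "raise_alpha j N \<noteq> 0" "N < 2 \<Longrightarrow> raise_beta j N = 0" for N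
      using raise_alpha_pos raise_beta_eq_0 by (auto simp: less_le)
    show "N < n \<Longrightarrow> X N n = 0" for N n
      by (simp add: X_def cos_coeff_eq_0)
    show "raise_alpha j N * X N n - raise_beta j N * X (N-2) n = (if N = n then 1 else 0)" for N n
      using Suc.IH[of n N] unfolding X_def cos_coeff_raise[of j N]
      by (simp add: sum_distrib_left sum_subtractf right_diff_distrib algebra_simps)
  qed
  then show ?case
    unfolding sum_inv_coeff_Suc[of j n "cos_coeff (Suc j) N"] X_def by (simp only: add.assoc)
qed

section \<open>The coefficients \<open>a_i(n, k)\<close>\<close>

lemma dfact_odd_Suc: "dfact_odd (Suc k) = dfact_odd k * (2 * real k + 1)"
  by (simp add: dfact_odd_def)

lemma dfact_odd_pos: "dfact_odd k > 0"
  by (auto simp: dfact_odd_def intro!: prod_pos)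

lemma choose_mult_eq_choose_pred_mult:
  assumes "i \<ge> 1"
  shows "real (k choose i) * real i = real (k choose (i - 1)) * (real k + 1 - real i)"
proof -
  have "i * (Suc k choose i) = Suc k * (k choose (i - 1))"
    using times_binomial_minus1_eq[of i "Suc k"] assms by simp
  moreover have "Suc k choose i = (k choose (i - 1)) + (k choose i)"
    using choose_reduce_nat[of "Suc k" i] assms by simp
  ultimately have "real i * real (k choose (i - 1)) + real i * real (k choose i)
      = (real k + 1) * real (k choose (i - 1))"
    by (metis add_mult_distrib2 of_nat_Suc of_nat_add of_nat_mult add.commute)
  then show ?thesis by (simp add: algebra_simps)
qed

lemma pochhammer_add_2_last:
  "pochhammer (a::real) (m + 2) = pochhammer a m * (a + real m) * (a + real m + 1)"
  by (simp add: numeral_2_eq_2 pochhammer_Suc algebra_simps)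

lemma pochhammer_add_2_first:
  "pochhammer (a::real) (m + 2) = a * (a + 1) * pochhammer (a + 2) m"
  by (simp add: numeral_2_eq_2 pochhammer_rec algebra_simps)

text \<open>The factor shared by the three terms of the recursion of \<open>coef_a\<close> in \<open>k\<close>.\<close>
definition coef_a_factor :: "nat \<Rightarrow> nat \<Rightarrow> nat \<Rightarrow> real" where
  "coef_a_factor i n k = (-1)^i * (real n + 2 * real i) * (real n + 2 * real k) * (real n + 2 * real k + 1)
     * pochhammer (real n + 1) (2*k - 1) / (2^Suc k * dfact_odd k * (2 * real k + 1)
     * pochhammer (real n + real i) (k + 1) * (real n + real i + real k + 1))"

lemma coef_a_Suc_eq_factor:
  assumes k: "k \<ge> 1" and i_n: "i \<noteq> 0 \<or> n \<noteq> 0"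
  shows "coef_a i n (Suc k) = coef_a_factor i n k * real (Suc k choose i) * (real n + real k + 1)"
proof -
  define x y z where "x = real n" and "y = real i" and "z = real k"
  define P1 P2 where "P1 = pochhammer (x + 1) (2*k - 1)" and "P2 = pochhammer (x + y) (k + 1)"
  have pos: "x + y > 0" "P2 > 0" "dfact_odd k > 0"
    using i_n by (auto simp: x_def y_def P2_def pochhammer_pos dfact_odd_pos)
  have two_k: "2 * Suc k - 1 = (2*k - 1) + 2" using k by simp
  have "pochhammer (x + 1) (2 * Suc k - 1) = P1 * (x + 2*z) * (x + 2*z + 1)"
    using k unfolding two_k P1_def z_def pochhammer_add_2_last by (simp add: of_nat_diff algebra_simps)
  moreover have "pochhammer (x + y) (Suc k + 1) = P2 * (x + y + z + 1)"
    by (simp add: P2_def pochhammer_Suc z_def algebra_simps)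
  ultimately show ?thesis using i_n pos
    by (simp add: coef_a_def coef_a_factor_def dfact_odd_Suc x_def y_def z_def P1_def P2_def)
      (simp add: field_simps)
qed

lemma raise_alpha_mult_coef_a:
  assumes k: "k \<ge> 1" and i_n: "i \<noteq> 0 \<or> n \<noteq> 0"
  shows "raise_alpha k n * coef_a i n k
    = coef_a_factor i n k * real (k choose i) * (real n + real i + real k + 1)"
proof -
  have "real n + real i > 0" "pochhammer (real n + real i) (k + 1) > 0" "dfact_odd k > 0"
    using i_n by (auto simp: pochhammer_pos dfact_odd_pos)
  then show ?thesis using i_n k
    by (simp add: coef_a_def coef_a_factor_def raise_alpha_def) (simp add: field_simps)
qed

lemma raise_beta_mult_coef_a_pred:
  assumes k: "k \<ge> 1" and i: "i \<ge> 1"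
  shows "raise_beta k (n+2) * coef_a (i - 1) (n+2) k
    = - coef_a_factor i n k * real (k choose (i - 1)) * (real n + real i)"
proof -
  define x y z where "x = real n" and "y = real i" and "z = real k"
  define P1 P2 where "P1 = pochhammer (x + 1) (2*k - 1)" and "P2 = pochhammer (x + y) (k + 1)"
  define Q R where "Q = pochhammer (x + 3) (2*k - 1)" and "R = pochhammer (x + y + 1) (k + 1)"
  define u v where "u = x + 2 + z" and "v = 2*z + 1"
  have pos: "x + y > 0" "x + 1 > 0" "x + 2 > 0" "x + y + z + 1 > 0" "u > 0" "v > 0"
    "P1 > 0" "P2 > 0" "R > 0" "dfact_odd k > 0"
    using i by (auto simp: x_def y_def z_def u_def v_def P1_def P2_def R_def pochhammer_pos dfact_odd_pos)
  have P1_Q: "P1 * (x + 2*z) * (x + 2*z + 1) = (x + 1) * (x + 2) * Q"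
    using pochhammer_add_2_last[of "x + 1" "2*k - 1"] pochhammer_add_2_first[of "x + 1" "2*k - 1"] k
    by (simp add: P1_def Q_def z_def of_nat_diff algebra_simps)
  have P2_R: "P2 * (x + y + z + 1) = (x + y) * R"
    using pochhammer_Suc[of "x + y" "k + 1"] pochhammer_rec[of "x + y" "k + 1"]
    by (simp add: P2_def R_def z_def algebra_simps)
  have "(x + 1) * (x + 2) * Q / R = P1 * (x + 2*z) * (x + 2*z + 1) * (x + y) / ((x + y) * R)"
    unfolding P1_Q using pos by simp
  also have "\<dots> = P1 * (x + 2*z) * (x + 2*z + 1) * (x + y) / (P2 * (x + y + z + 1))"
    unfolding P2_R ..
  finally have QR: "(x + 1) * (x + 2) * Q / R
      = P1 * (x + 2*z) * (x + 2*z + 1) * (x + y) / (P2 * (x + y + z + 1))" .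
  have coef: "coef_a (i - 1) (n+2) k
      = (-1)^(i - 1) / 2^k * real (k choose (i - 1)) * (u * (x + 2*y)) / dfact_odd k * Q / R"
    using i by (simp add: u_def coef_a_def x_def y_def z_def Q_def R_def of_nat_diff algebra_simps)
  have sign: "(-1::real) ^ (i - 1) = - ((-1) ^ i)" using i by (cases i) auto
  have beta: "raise_beta k (n+2) = (x + 2) * (x + 1) / (2 * v * u)"
    by (simp add: raise_beta_def x_def z_def u_def v_def algebra_simps)
  have "raise_beta k (n+2) * coef_a (i - 1) (n+2) k
      = - ((-1)^i * (x + 2*y) / (2^Suc k * dfact_odd k * v)) * real (k choose (i - 1))
          * ((x + 1) * (x + 2) * Q / R)"
    unfolding coef beta sign using pos by (simp add: field_simps)
  also have "\<dots> = - coef_a_factor i n k * real (k choose (i - 1)) * (x + y)"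
    unfolding QR coef_a_factor_def v_def using pos by (simp add: x_def y_def z_def P1_def P2_def field_simps)
  finally show ?thesis by (simp add: x_def y_def)
qed

lemma coef_a_Suc:
  assumes k: "k \<ge> 1" and i_n: "i \<noteq> 0 \<or> n \<noteq> 0"
  shows "coef_a i n (Suc k) = raise_alpha k n * coef_a i n k
    - (if i = 0 then 0 else raise_beta k (n+2) * coef_a (i - 1) (n+2) k)"
proof (cases "i = 0")
  case True
  then show ?thesis using coef_a_Suc_eq_factor[OF assms] raise_alpha_mult_coef_a[OF assms] by simp
next
  case False
  then have "real (Suc k choose i) * (real n + real k + 1)
      = real (k choose i) * (real n + real i + real k + 1) + real (k choose (i - 1)) * (real n + real i)"
    using choose_mult_eq_choose_pred_mult[of i k] choose_reduce_nat[of "Suc k" i]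
    by (simp add: algebra_simps)
  then show ?thesis
    using coef_a_Suc_eq_factor[OF assms] raise_alpha_mult_coef_a[OF assms]
      raise_beta_mult_coef_a_pred[OF k] False
    by (simp add: algebra_simps)
qed

lemma coef_a_1: "coef_a i n 1 = inv_coeff 1 i n"
proof -
  consider "i = 0" "n = 0" | "i = 0" "n > 0" | "i = 1" | "i \<ge> 2" by linarith
  then show ?thesis
  proof cases
    case 2
    have "pochhammer (real n) (Suc (Suc 0)) = real n * (real n + 1)"
      by (simp add: pochhammer_Suc)
    moreover have "real n > 0" using 2 by simp
    ultimately show ?thesis using 2
      by (simp add: coef_a_def raise_alpha_def dfact_odd_def) (simp add: field_simps)
  next
    case 3
    have "pochhammer (real n + 1) (Suc (Suc 0)) = (real n + 1) * (real n + 2)"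
      by (simp add: pochhammer_Suc algebra_simps)
    with 3 show ?thesis
      by (simp add: coef_a_def raise_beta_def dfact_odd_def) (simp add: algebra_simps)
  qed (simp_all add: coef_a_def raise_alpha_def inv_coeff_eq_0)
qed

lemma coef_a_eq_inv_coeff: "k \<ge> 1 \<Longrightarrow> coef_a i n k = inv_coeff k i n"
proof (induction k arbitrary: i n rule: nat_induct_at_least)
  case base
  then show ?case by (rule coef_a_1)
next
  case (Suc k)
  show ?case
  proof (cases "i = 0 \<and> n = 0")
    case True
    have "inv_coeff k 0 0 = 1" using Suc.IH[of 0 0] by (simp add: coef_a_def)
    with True Suc.hyps show ?thesis by (simp add: coef_a_def raise_alpha_def)
  next
    case False
    with Suc show ?thesis by (simp add: coef_a_Suc)
  qed
qed

theorem theorem1: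
  fixes k :: nat and \<psi> :: "real \<Rightarrow> real" and b1 bk :: "nat \<Rightarrow> real"
  assumes "k \<ge> 1"
    and "\<psi> \<in> Psi (2*k + 1)"
    and "is_schoenberg_coeffs 1 \<psi> b1"
    and "is_schoenberg_coeffs (2*k + 1) \<psi> bk"
  shows "\<forall>n. bk n = (\<Sum>i\<le>k. coef_a i n k * b1 (n + 2*i))"
proof
  fix n
  have "(\<lambda>N. \<Sum>i\<le>k. coef_a i n k * (bk N * cos_coeff k N (n + 2*i)))
      sums (\<Sum>i\<le>k. coef_a i n k * b1 (n + 2*i))"
    using assms(3,4) by (intro sums_sum sums_mult cos_coeff_series)
  moreover have "(\<Sum>i\<le>k. coef_a i n k * (bk N * cos_coeff k N (n + 2*i))) = (if N = n then bk N else 0)"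
    for N
    using inv_coeff_cos_coeff[of k n N]
    by (simp add: coef_a_eq_inv_coeff[OF assms(1)] sum_distrib_left[symmetric] algebra_simps)
  ultimately have "(\<lambda>N. if N = n then bk N else 0) sums (\<Sum>i\<le>k. coef_a i n k * b1 (n + 2*i))"
    by simp
  then show "bk n = (\<Sum>i\<le>k. coef_a i n k * b1 (n + 2*i))"
    using sums_single[of n bk] sums_unique2 by blast
qed

end
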